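(* For every finite graph $G=(V,E)$ with $N$ vertices and every function $f:V\to\mathbb{R}$, the size of a minimum vertex cover of (the underlying undirected graph of) the violation graph $B_{0,f}$ equals $N\cdot\ell_0(f,\mathrm{Lip})$.
   Context: $\mathrm{dist}_G$ is the shortest-path distance; $g$ is Lipschitz if $|g(x)-g(y)|\le\mathrm{dist}_G(x,y)$ for all $x,y$, and $\mathrm{Lip}$ is the set of Lipschitz functions. $\ell_0(f,\mathrm{Lip})=\min_{g\in\mathrm{Lip}}\Pr_x[f(x)\ne g(x)]$ with $x$ uniform in $V$. $VS_f(x,y)=|f(x)-f(y)|-\mathrm{dist}_G(x,y)$ if positive, else $0$; $B_{0,f}$ has an edge $(x,y)$ iff $VS_f(x,y)>0$ and $f(x)<f(y)$. *)

theory Defs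
  imports Complex_Main "HOL-Library.Extended_Real" "HOL-Library.Extended_Nat"
begin

definition graph :: "'a set \<Rightarrow> ('a \<times> 'a) set \<Rightarrow> bool" where
  "graph V E \<longleftrightarrow> finite V \<and> E \<subseteq> V \<times> V \<and> sym E \<and> irrefl E"

definition dist_G :: "('a \<times> 'a) set \<Rightarrow> 'a \<Rightarrow> 'a \<Rightarrow> enat" where
  "dist_G E x y = (INF n \<in> {n. (x, y) \<in> E ^^ n}. enat n)"

definition lipschitz_on_graph :: "'a set \<Rightarrow> ('a \<times> 'a) set \<Rightarrow> ('a \<Rightarrow> real) \<Rightarrow> bool" where
  "lipschitz_on_graph V E g \<longleftrightarrow>
     (\<forall>x\<in>V. \<forall>y\<in>V. ereal \<bar>g x - g y\<bar> \<le> ereal_of_enat (dist_G E x y))"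

definition Lip :: "'a set \<Rightarrow> ('a \<times> 'a) set \<Rightarrow> ('a \<Rightarrow> real) set" where
  "Lip V E = {g. lipschitz_on_graph V E g}"

definition disagree :: "'a set \<Rightarrow> ('a \<Rightarrow> real) \<Rightarrow> ('a \<Rightarrow> real) \<Rightarrow> real" where
  "disagree V f g = real (card {x\<in>V. f x \<noteq> g x}) / real (card V)"

definition ell0 :: "'a set \<Rightarrow> ('a \<times> 'a) set \<Rightarrow> ('a \<Rightarrow> real) \<Rightarrow> real" where
  "ell0 V E f = Min ((\<lambda>g. disagree V f g) ` Lip V E)"

definition VS :: "('a \<times> 'a) set \<Rightarrow> ('a \<Rightarrow> real) \<Rightarrow> 'a \<Rightarrow> 'a \<Rightarrow> ereal" where
  "VS E f x y = (let d = ereal \<bar>f x - f y\<bar> - ereal_of_enat (dist_G E x y)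
                 in if d > 0 then d else 0)"

definition viol_graph :: "'a set \<Rightarrow> ('a \<times> 'a) set \<Rightarrow> ('a \<Rightarrow> real) \<Rightarrow> ('a \<times> 'a) set" where
  "viol_graph V E f = {(x, y). x \<in> V \<and> y \<in> V \<and> VS E f x y > 0 \<and> f x < f y}"

definition vertex_cover :: "'a set \<Rightarrow> ('a \<times> 'a) set \<Rightarrow> 'a set \<Rightarrow> bool" where
  "vertex_cover V B C \<longleftrightarrow> C \<subseteq> V \<and> (\<forall>(x, y)\<in>B. x \<in> C \<or> y \<in> C)"

definition min_vertex_cover :: "'a set \<Rightarrow> ('a \<times> 'a) set \<Rightarrow> nat" where
  "min_vertex_cover V B = Min (card ` {C. vertex_cover V B C})"

end

theory Submission
  imports Defs
begin

text \<open>Every Lipschitz g disagrees with f on a vertex cover of the violation graph, since a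
  violated pair cannot keep both its values. Conversely, on the complement of a vertex cover
  f has no violated pair, so the McShane-type extension
  g x = min {f y + dist(x, y) | y outside the cover, reachable from x}
  is a Lipschitz function agreeing with f off the cover.\<close>

lemma relpow_sym:
  assumes "sym E" and "(x, y) \<in> E ^^ n"
  shows "(y, x) \<in> E ^^ n"
  using assms(2)
proof (induction n arbitrary: x y)
  case 0
  then show ?case by simp
next
  case (Suc n)
  then obtain w where "(x, w) \<in> E ^^ n" "(w, y) \<in> E"
    by (meson relpow_Suc_E)
  with Suc.IH \<open>sym E\<close> show ?case
    by (meson relpow_Suc_I2 symD)
qed

definition hop_dist :: "('a \<times> 'a) set \<Rightarrow> 'a \<Rightarrow> 'a \<Rightarrow> nat" where
  "hop_dist E x y = (LEAST n. (x, y) \<in> E ^^ n)"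

lemma relpow_hop_dist: "(x, y) \<in> E\<^sup>* \<Longrightarrow> (x, y) \<in> E ^^ hop_dist E x y"
  unfolding hop_dist_def rtrancl_power by (auto intro: LeastI)

lemma hop_dist_le: "(x, y) \<in> E ^^ n \<Longrightarrow> hop_dist E x y \<le> n"
  unfolding hop_dist_def by (rule Least_le)

lemma hop_dist_self [simp]: "hop_dist E x x = 0"
  unfolding hop_dist_def by (rule Least_eq_0) simp

lemma hop_dist_triangle:
  assumes "(x, y) \<in> E\<^sup>*" and "(y, z) \<in> E\<^sup>*"
  shows "hop_dist E x z \<le> hop_dist E x y + hop_dist E y z"
  using relpow_trans[OF relpow_hop_dist[OF assms(1)] relpow_hop_dist[OF assms(2)]]
  by (rule hop_dist_le)

lemma hop_dist_commute:
  assumes "sym E"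
  shows "hop_dist E x y = hop_dist E y x"
proof (cases "(x, y) \<in> E\<^sup>*")
  case True
  then have "(y, x) \<in> E\<^sup>*"
    using sym_rtrancl[OF assms] by (meson symD)
  with True show ?thesis
    by (meson antisym hop_dist_le relpow_hop_dist relpow_sym assms)
next
  case False
  then have "(y, x) \<notin> E\<^sup>*"
    using sym_rtrancl[OF assms] by (meson symD)
  with False show ?thesis
    unfolding hop_dist_def rtrancl_power by simp
qed

lemma dist_G_conv_hop_dist:
  "dist_G E x y = (if (x, y) \<in> E\<^sup>* then enat (hop_dist E x y) else \<infinity>)"
proof (cases "(x, y) \<in> E\<^sup>*")
  case True
  have "dist_G E x y = enat (hop_dist E x y)"
    unfolding dist_G_def
  proof (rule antisym)
    show "(INF n \<in> {n. (x, y) \<in> E ^^ n}. enat n) \<le> enat (hop_dist E x y)"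
      using relpow_hop_dist[OF True] by (auto intro: INF_lower)
    show "enat (hop_dist E x y) \<le> (INF n \<in> {n. (x, y) \<in> E ^^ n}. enat n)"
      by (rule INF_greatest) (auto intro: hop_dist_le)
  qed
  with True show ?thesis by simp
next
  case False
  then show ?thesis
    unfolding dist_G_def rtrancl_power by (simp add: top_enat_def)
qed

lemma lipschitz_on_graph_iff:
  "lipschitz_on_graph V E g \<longleftrightarrow>
     (\<forall>x\<in>V. \<forall>y\<in>V. (x, y) \<in> E\<^sup>* \<longrightarrow> \<bar>g x - g y\<bar> \<le> real (hop_dist E x y))"
  unfolding lipschitz_on_graph_def dist_G_conv_hop_dist by auto

lemma VS_pos_iff:
  "VS E f x y > 0 \<longleftrightarrow> (x, y) \<in> E\<^sup>* \<and> \<bar>f x - f y\<bar> > real (hop_dist E x y)"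
  unfolding VS_def dist_G_conv_hop_dist Let_def by auto

lemma viol_graph_subset: "viol_graph V E f \<subseteq> V \<times> V"
  unfolding viol_graph_def by auto

lemma vertex_cover_disagreement_set:
  assumes "g \<in> Lip V E"
  shows "vertex_cover V (viol_graph V E f) {x \<in> V. f x \<noteq> g x}"
proof -
  have "f x \<noteq> g x \<or> f y \<noteq> g y" if "(x, y) \<in> viol_graph V E f" for x y
  proof -
    from that have "x \<in> V" "y \<in> V" "(x, y) \<in> E\<^sup>*" "\<bar>f x - f y\<bar> > real (hop_dist E x y)"
      unfolding viol_graph_def VS_pos_iff by auto
    moreover have "\<bar>g x - g y\<bar> \<le> real (hop_dist E x y)"
      using assms calculation unfolding Lip_def lipschitz_on_graph_iff by auto
    ultimately show ?thesis by auto
  qed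
  then show ?thesis
    using viol_graph_subset unfolding vertex_cover_def by blast
qed

lemma lipschitz_outside_vertex_cover:
  assumes "sym E" and "vertex_cover V (viol_graph V E f) C"
    and "x \<in> V - C" and "y \<in> V - C" and "(x, y) \<in> E\<^sup>*"
  shows "\<bar>f x - f y\<bar> \<le> real (hop_dist E x y)"
proof (rule ccontr)
  assume violated: "\<not> ?thesis"
  have "(y, x) \<in> E\<^sup>*"
    using sym_rtrancl[OF assms(1)] assms(5) by (meson symD)
  with assms(3-5) violated have "(x, y) \<in> viol_graph V E f \<or> (y, x) \<in> viol_graph V E f"
    unfolding viol_graph_def VS_pos_iff
    by (auto simp: abs_minus_commute hop_dist_commute[OF assms(1), of y x])
  with assms(2-4) show False
    unfolding vertex_cover_def by auto
qed

text \<open>On components of the graph that miss A the value is irrelevant; 0 is an arbitrary choice.\<close>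
definition lipschitz_ext :: "('a \<times> 'a) set \<Rightarrow> 'a set \<Rightarrow> ('a \<Rightarrow> real) \<Rightarrow> 'a \<Rightarrow> real" where
  "lipschitz_ext E A f x =
     (let S = {y \<in> A. (x, y) \<in> E\<^sup>*}
      in if S = {} then 0 else Min ((\<lambda>y. f y + real (hop_dist E x y)) ` S))"

lemma lipschitz_ext_attained:
  assumes "finite A" and "y \<in> A" and "(x, y) \<in> E\<^sup>*"
  obtains z where "z \<in> A" "(x, z) \<in> E\<^sup>*" "lipschitz_ext E A f x = f z + real (hop_dist E x z)"
    "lipschitz_ext E A f x \<le> f y + real (hop_dist E x y)"
proof -
  let ?S = "{y \<in> A. (x, y) \<in> E\<^sup>*}"
  let ?h = "\<lambda>y. f y + real (hop_dist E x y)"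
  have "finite ?S" "?S \<noteq> {}"
    using assms by auto
  then have "Min (?h ` ?S) \<in> ?h ` ?S" "Min (?h ` ?S) \<le> ?h y"
    using assms by auto
  moreover have "lipschitz_ext E A f x = Min (?h ` ?S)"
    unfolding lipschitz_ext_def Let_def if_not_P[OF \<open>?S \<noteq> {}\<close>] ..
  ultimately show ?thesis
    using that by auto
qed

lemma lipschitz_ext_le:
  assumes "finite A" and "(x, z) \<in> E\<^sup>*" and "\<exists>y\<in>A. (z, y) \<in> E\<^sup>*"
  shows "lipschitz_ext E A f x \<le> lipschitz_ext E A f z + real (hop_dist E x z)"
proof -
  obtain y where y: "y \<in> A" "(z, y) \<in> E\<^sup>*"
    and gz: "lipschitz_ext E A f z = f y + real (hop_dist E z y)"
    using assms(3) lipschitz_ext_attained[OF assms(1)] by metis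
  have "(x, y) \<in> E\<^sup>*"
    using assms(2) y(2) by simp
  then have "lipschitz_ext E A f x \<le> f y + real (hop_dist E x y)"
    using lipschitz_ext_attained[OF assms(1) y(1)] by metis
  also have "\<dots> \<le> lipschitz_ext E A f z + real (hop_dist E x z)"
    using gz hop_dist_triangle[OF assms(2) y(2)] by linarith
  finally show ?thesis .
qed

lemma lipschitz_ext_Lip:
  assumes "sym E" and "finite A"
  shows "lipschitz_ext E A f \<in> Lip V E"
  unfolding Lip_def lipschitz_on_graph_iff
proof (intro CollectI ballI impI)
  fix x z assume xz: "(x, z) \<in> E\<^sup>*"
  then have zx: "(z, x) \<in> E\<^sup>*"
    using sym_rtrancl[OF assms(1)] by (meson symD)
  let ?g = "lipschitz_ext E A f"
  show "\<bar>?g x - ?g z\<bar> \<le> real (hop_dist E x z)"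
  proof (cases "\<exists>y\<in>A. (z, y) \<in> E\<^sup>*")
    case True
    then have "\<exists>y\<in>A. (x, y) \<in> E\<^sup>*"
      using xz by (meson rtrancl_trans)
    with True show ?thesis
      using lipschitz_ext_le[OF assms(2) xz, where f = f] lipschitz_ext_le[OF assms(2) zx, where f = f]
        hop_dist_commute[OF assms(1), of z x] by auto
  next
    case False
    then have "\<not> (\<exists>y\<in>A. (x, y) \<in> E\<^sup>*)"
      using zx by (meson rtrancl_trans)
    with False show ?thesis
      unfolding lipschitz_ext_def by simp
  qed
qed

lemma lipschitz_ext_eq:
  assumes "finite A" and "x \<in> A"
    and "\<And>y. y \<in> A \<Longrightarrow> (x, y) \<in> E\<^sup>* \<Longrightarrow> \<bar>f x - f y\<bar> \<le> real (hop_dist E x y)"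
  shows "lipschitz_ext E A f x = f x"
proof -
  obtain z where "z \<in> A" "(x, z) \<in> E\<^sup>*"
    and "lipschitz_ext E A f x = f z + real (hop_dist E x z)"
    and "lipschitz_ext E A f x \<le> f x"
    using lipschitz_ext_attained[OF assms(1,2) rtrancl_refl] by auto
  with assms(3)[of z] show ?thesis
    by linarith
qed

lemma finite_vertex_cover_cards:
  "finite V \<Longrightarrow> finite (card ` {C. vertex_cover V B C})"
  by (rule finite_subset[of _ "{..card V}"]) (auto simp: vertex_cover_def intro: card_mono)

lemma min_vertex_cover_le:
  "finite V \<Longrightarrow> vertex_cover V B C \<Longrightarrow> min_vertex_cover V B \<le> card C"
  unfolding min_vertex_cover_def by (auto intro: Min_le finite_vertex_cover_cards)

lemma min_vertex_cover_attained:
  assumes "finite V" and "B \<subseteq> V \<times> V"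
  obtains C where "vertex_cover V B C" "card C = min_vertex_cover V B"
proof -
  have "vertex_cover V B V"
    using assms(2) unfolding vertex_cover_def by auto
  then have "min_vertex_cover V B \<in> card ` {C. vertex_cover V B C}"
    unfolding min_vertex_cover_def using finite_vertex_cover_cards[OF assms(1)]
    by (intro Min_in) auto
  with that show ?thesis by auto
qed

lemma ell0_eqI:
  assumes "finite V" and "g \<in> Lip V E"
    and "\<And>h. h \<in> Lip V E \<Longrightarrow> card {x \<in> V. f x \<noteq> g x} \<le> card {x \<in> V. f x \<noteq> h x}"
  shows "ell0 V E f = disagree V f g"
  unfolding ell0_def
proof (rule Min_eqI)
  have "disagree V f ` Lip V E \<subseteq> (\<lambda>k. real k / real (card V)) ` {..card V}"
    unfolding disagree_def using assms(1) by (auto intro!: imageI card_mono)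
  then show "finite (disagree V f ` Lip V E)"
    by (rule finite_subset) simp
  show "disagree V f g \<le> d" if "d \<in> disagree V f ` Lip V E" for d
    using that assms(3) unfolding disagree_def by (auto intro!: divide_right_mono)
  show "disagree V f g \<in> disagree V f ` Lip V E"
    using assms(2) by simp
qed

lemma Lip_agreeing_off_vertex_cover:
  assumes "graph V E" and "vertex_cover V (viol_graph V E f) C"
  obtains g where "g \<in> Lip V E" and "{x \<in> V. f x \<noteq> g x} \<subseteq> C"
proof
  have "finite V" "sym E"
    using assms(1) unfolding graph_def by auto
  then show "lipschitz_ext E (V - C) f \<in> Lip V E"
    by (simp add: lipschitz_ext_Lip)
  have "lipschitz_ext E (V - C) f x = f x" if "x \<in> V - C" for x
    using \<open>finite V\<close> that
    by (intro lipschitz_ext_eq) (auto intro: lipschitz_outside_vertex_cover[OF \<open>sym E\<close> assms(2)])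
  then show "{x \<in> V. f x \<noteq> lipschitz_ext E (V - C) f x} \<subseteq> C"
    by force
qed

theorem claim3p3:
  fixes V :: "'a set" and E :: "('a \<times> 'a) set" and f :: "'a \<Rightarrow> real"
  assumes "graph V E"
  shows "real (min_vertex_cover V (viol_graph V E f)) = real (card V) * ell0 V E f"
proof -
  have "finite V"
    using assms unfolding graph_def by auto
  let ?m = "min_vertex_cover V (viol_graph V E f)"
  let ?D = "\<lambda>h. card {x \<in> V. f x \<noteq> h x}"
  obtain C where C: "vertex_cover V (viol_graph V E f) C" "card C = ?m"
    using min_vertex_cover_attained[OF \<open>finite V\<close> viol_graph_subset] .
  then obtain g where g_Lip: "g \<in> Lip V E" and "{x \<in> V. f x \<noteq> g x} \<subseteq> C"
    using Lip_agreeing_off_vertex_cover[OF assms] by blast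
  then have "?D g \<le> ?m"
    using C \<open>finite V\<close> unfolding vertex_cover_def by (metis card_mono finite_subset)
  moreover have opt: "?m \<le> ?D h" if "h \<in> Lip V E" for h
    using min_vertex_cover_le[OF \<open>finite V\<close> vertex_cover_disagreement_set[OF that]] .
  ultimately have "?D g = ?m"
    using g_Lip by (simp add: antisym)
  moreover have "ell0 V E f = disagree V f g"
    using ell0_eqI[OF \<open>finite V\<close> g_Lip] opt \<open>?D g = ?m\<close> by metis
  moreover have "?D g \<le> card V"
    using \<open>finite V\<close> by (simp add: card_mono)
  ultimately show ?thesis
    unfolding disagree_def by (cases "card V = 0") auto
qed

end
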